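(* Let $\mu$ be a probability measure on $\mathbb{R}^n$ with mean $0$, and let $\alpha:\mathbb{R}^n\to\mathbb{R}\cup\{+\infty\}$ be convex, lower semi-continuous and proper. Suppose that for every probability measure $\nu$ on $\mathbb{R}^n$, $\mathcal{W}_c(\nu,\mu)\le H(\nu|\mu)$ with cost $c(x,y)=\alpha(x-y)$. Then $\alpha(x)\le\Lambda_\mu^*(x)$ for all $x\in\mathbb{R}^n$.
   Context: $\mathcal{W}_c(\nu,\mu)=\inf_\pi\int c\,d\pi$ over couplings $\pi$ of $\nu$ and $\mu$; $H$ is relative entropy. $\Lambda_\mu(\xi)=\log\int e^{\langle\xi,x\rangle}d\mu(x)$ and $\Lambda^*_\mu(x)=\sup_{\xi\in\mathbb{R}^n}\{\langle\xi,x\rangle-\Lambda_\mu(\xi)\}$ its Legendre transform. *)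

theory Defs
  imports "HOL-Probability.Probability"
begin

definition ereal_convex :: "('a::real_vector \<Rightarrow> ereal) \<Rightarrow> bool" where
  "ereal_convex f \<longleftrightarrow> (\<forall>x y. \<forall>t::real. 0 < t \<and> t < 1 \<longrightarrow>
     f ((1 - t) *\<^sub>R x + t *\<^sub>R y) \<le> ereal (1 - t) * f x + ereal t * f y)"

definition ereal_lsc :: "('a::topological_space \<Rightarrow> ereal) \<Rightarrow> bool" where
  "ereal_lsc f \<longleftrightarrow> (\<forall>x. f x \<le> Liminf (at x) f)"

definition ereal_proper :: "('a \<Rightarrow> ereal) \<Rightarrow> bool" where
  "ereal_proper f \<longleftrightarrow> (\<forall>x. f x \<noteq> -\<infinity>) \<and> (\<exists>x. f x \<noteq> \<infinity>)"

text \<open>Integral of an extended-real valued function: positive part minus negative part,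
  with the convention \<infinity> - \<infinity> = \<infinity> (Isabelle's ereal arithmetic).\<close>
definition ereal_integral :: "'a measure \<Rightarrow> ('a \<Rightarrow> ereal) \<Rightarrow> ereal" where
  "ereal_integral M f =
     enn2ereal (\<integral>\<^sup>+ x. e2ennreal (max 0 (f x)) \<partial>M)
     - enn2ereal (\<integral>\<^sup>+ x. e2ennreal (max 0 (- f x)) \<partial>M)"

definition borel_prob :: "'a::topological_space measure \<Rightarrow> bool" where
  "borel_prob M \<longleftrightarrow> prob_space M \<and> sets M = sets borel"

definition couplings :: "'a::topological_space measure \<Rightarrow> 'b::topological_space measure
    \<Rightarrow> ('a \<times> 'b) measure set" where
  "couplings \<nu> \<mu> = {\<pi>. prob_space \<pi> \<and> sets \<pi> = sets (borel \<Otimes>\<^sub>M borel)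
      \<and> distr \<pi> borel fst = \<nu> \<and> distr \<pi> borel snd = \<mu>}"

definition transport_cost :: "('a::topological_space \<Rightarrow> 'a \<Rightarrow> ereal) \<Rightarrow> 'a measure \<Rightarrow> 'a measure \<Rightarrow> ereal" where
  "transport_cost c \<nu> \<mu> = (INF \<pi>\<in>couplings \<nu> \<mu>. ereal_integral \<pi> (\<lambda>(x,y). c x y))"

text \<open>Relative entropy H(\<nu>|\<mu>) = \<integral> log(d\<nu>/d\<mu>) d\<nu> = \<integral> f log f d\<mu> if \<nu> \<ll> \<mu>, else +\<infinity>.\<close>
definition rel_entropy :: "'a measure \<Rightarrow> 'a measure \<Rightarrow> ereal" where
  "rel_entropy \<nu> \<mu> =
     (if absolutely_continuous \<mu> \<nu> \<and> sets \<nu> = sets \<mu> then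
        ereal_integral \<mu> (\<lambda>x. let f = enn2real (RN_deriv \<mu> \<nu> x) in ereal (f * ln f))
      else \<infinity>)"

definition log_laplace :: "'a::euclidean_space measure \<Rightarrow> 'a \<Rightarrow> ereal" where
  "log_laplace \<mu> \<xi> =
     (let I = \<integral>\<^sup>+ x. ennreal (exp (\<xi> \<bullet> x)) \<partial>\<mu> in
      if I = \<infinity> then \<infinity> else ereal (ln (enn2real I)))"

definition cramer_transform :: "'a::euclidean_space measure \<Rightarrow> 'a \<Rightarrow> ereal" where
  "cramer_transform \<mu> x = (SUP \<xi>. ereal (\<xi> \<bullet> x) - log_laplace \<mu> \<xi>)"

end

(* Separating the closed convex epigraph of alpha from a point (x, t) below it yields an affine
   minorant y \<mapsto> \<eta> \<bullet> y + c of alpha with t < \<eta> \<bullet> x + c.  For such a minorant, test the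
   transport inequality on the exponentially tilted measure d\<nu> = e^g d\<mu> / \<integral> e^g d\<mu> with
   g = min (\<eta> \<bullet> _) B: the potentials g and c - \<eta> \<bullet> _ give W_c(\<nu>, \<mu>) \<ge> \<integral> g d\<nu> + c since
   \<mu> is centred, while H(\<nu>|\<mu>) = \<integral> g d\<nu> - log \<integral> e^g d\<mu>.  Hence \<integral> e^g d\<mu> \<le> e^(-c), and
   letting B \<rightarrow> \<infinity> gives \<Lambda>_\<mu>(\<eta>) \<le> -c, i.e. t < \<eta> \<bullet> x + c \<le> \<Lambda>*_\<mu>(x). *)

theory Submission
  imports Defs
begin

definition ereal_epigraph :: "('a \<Rightarrow> ereal) \<Rightarrow> ('a \<times> real) set" where
  "ereal_epigraph f = {p. f (fst p) \<le> ereal (snd p)}"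

lemma convex_ereal_epigraph:
  fixes f :: "'a::real_vector \<Rightarrow> ereal"
  assumes "ereal_convex f"
  shows "convex (ereal_epigraph f)"
  unfolding convex_def ereal_epigraph_def
proof (intro ballI allI impI, clarsimp)
  fix y1 s1 y2 s2 and u v :: real
  assume h: "f y1 \<le> ereal s1" "f y2 \<le> ereal s2" "0 \<le> u" "0 \<le> v" "u + v = 1"
  show "f (u *\<^sub>R y1 + v *\<^sub>R y2) \<le> ereal (u * s1 + v * s2)"
  proof (cases "v = 0 \<or> v = 1")
    case True
    then show ?thesis using h by auto
  next
    case False
    then have "0 < v" "v < 1" "u = 1 - v" using h by auto
    then have "f (u *\<^sub>R y1 + v *\<^sub>R y2) \<le> ereal u * f y1 + ereal v * f y2"
      using assms unfolding ereal_convex_def by blast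
    also have "\<dots> \<le> ereal u * ereal s1 + ereal v * ereal s2"
      by (intro add_mono ereal_mult_left_mono) (use h in auto)
    finally show ?thesis by simp
  qed
qed

lemma ereal_lsc_eventually_greater:
  assumes "ereal_lsc f" and "r < f x"
  shows "eventually (\<lambda>y. r < f y) (nhds x)"
proof -
  have "eventually (\<lambda>y. r < f y) (at x)"
    using assms by (intro less_LiminfD) (auto simp: ereal_lsc_def intro: less_le_trans)
  then show ?thesis
    using assms(2) unfolding eventually_at_filter by (auto elim: eventually_mono)
qed

lemma closed_ereal_epigraph:
  assumes "ereal_lsc f"
  shows "closed (ereal_epigraph f)"
  unfolding closed_def
proof (rule open_prod_intro)
  fix p assume "p \<in> - ereal_epigraph f"
  then obtain y s where p: "p = (y, s)" and "ereal s < f y"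
    by (cases p) (auto simp: ereal_epigraph_def)
  then obtain r where r: "s < r" "ereal r < f y"
    using ereal_dense2 by fastforce
  then obtain A where A: "open A" "y \<in> A" "\<forall>z\<in>A. ereal r < f z"
    using ereal_lsc_eventually_greater[OF assms] unfolding eventually_nhds by blast
  have "A \<times> {..<r} \<subseteq> - ereal_epigraph f"
  proof clarsimp
    fix z u assume "z \<in> A" "u < r" "(z, u) \<in> ereal_epigraph f"
    then have "f z \<le> ereal r" by (auto simp: ereal_epigraph_def intro: order_trans)
    with A(3) \<open>z \<in> A\<close> show False by (simp add: not_le[symmetric])
  qed
  then show "\<exists>A B. open A \<and> open B \<and> p \<in> A \<times> B \<and> A \<times> B \<subseteq> - ereal_epigraph f"
    using A p r by (intro exI[of _ A] exI[of _ "{..<r}"]) auto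
qed

lemma ereal_epigraph_separation:
  fixes f :: "'a::euclidean_space \<Rightarrow> ereal"
  assumes "ereal_convex f" "ereal_lsc f" "ereal_proper f" "ereal t < f x"
  obtains a b d where "a \<bullet> x + b * t < d" "0 \<le> b"
    "\<And>y s. f y \<le> ereal s \<Longrightarrow> d < a \<bullet> y + b * s"
proof -
  have "(x, t) \<notin> ereal_epigraph f" using assms(4) by (auto simp: ereal_epigraph_def)
  from separating_hyperplane_closed_point[OF convex_ereal_epigraph[OF assms(1)]
      closed_ereal_epigraph[OF assms(2)] this]
  obtain a b d where ab: "a \<bullet> x + b * t < d"
    and sep: "\<And>y s. f y \<le> ereal s \<Longrightarrow> d < a \<bullet> y + b * s"
    by (force simp: ereal_epigraph_def inner_Pair)
  obtain y0 r0 where r0: "f y0 = ereal r0"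
    using assms(3) unfolding ereal_proper_def by (metis ereal_cases)
  have "0 \<le> b"
  proof (rule ccontr)
    assume "\<not> 0 \<le> b"
    define s where "s = max r0 ((a \<bullet> y0 - d) / (- b))"
    have "d < a \<bullet> y0 + b * s" using r0 by (intro sep) (simp add: s_def)
    moreover have "b * s \<le> b * ((a \<bullet> y0 - d) / (- b))"
      using \<open>\<not> 0 \<le> b\<close> unfolding s_def by (intro mult_left_mono_neg) auto
    moreover have "b * ((a \<bullet> y0 - d) / (- b)) = d - a \<bullet> y0"
      using \<open>\<not> 0 \<le> b\<close> by (simp add: field_simps)
    ultimately show False by linarith
  qed
  with ab sep that show ?thesis by blast
qed

lemma affine_minorant_of_separation:
  fixes f :: "'a::real_inner \<Rightarrow> ereal"
  assumes "0 < b" and "\<And>y s. f y \<le> ereal s \<Longrightarrow> d < a \<bullet> y + b * s"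
  shows "ereal ((- a /\<^sub>R b) \<bullet> y + d / b) \<le> f y"
proof (rule ereal_le_real)
  fix s assume "f y \<le> ereal s"
  then have "d < a \<bullet> y + b * s" by (rule assms(2))
  then show "ereal ((- a /\<^sub>R b) \<bullet> y + d / b) \<le> ereal s"
    using assms(1) by (simp add: field_simps)
qed

lemma ereal_convex_lsc_has_affine_minorant:
  fixes f :: "'a::euclidean_space \<Rightarrow> ereal"
  assumes "ereal_convex f" "ereal_lsc f" "ereal_proper f"
  obtains \<eta> c where "\<And>y. ereal (\<eta> \<bullet> y + c) \<le> f y"
proof -
  obtain y0 r0 where r0: "f y0 = ereal r0"
    using assms(3) unfolding ereal_proper_def by (metis ereal_cases)
  then have "ereal (r0 - 1) < f y0" by simp
  then obtain a b d where sep: "a \<bullet> y0 + b * (r0 - 1) < d" "0 \<le> b"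
    "\<And>y s. f y \<le> ereal s \<Longrightarrow> d < a \<bullet> y + b * s"
    using ereal_epigraph_separation[OF assms] by blast
  have "b \<noteq> 0" using sep(1) sep(3)[of y0 r0] r0 by auto
  with sep(2) have "0 < b" by simp
  from affine_minorant_of_separation[OF this sep(3)] show ?thesis by (rule that)
qed

lemma ereal_convex_lsc_affine_minorant_above:
  fixes f :: "'a::euclidean_space \<Rightarrow> ereal"
  assumes "ereal_convex f" "ereal_lsc f" "ereal_proper f" "ereal t < f x"
  obtains \<eta> c where "\<And>y. ereal (\<eta> \<bullet> y + c) \<le> f y" "t < \<eta> \<bullet> x + c"
proof -
  obtain a b d where sep: "a \<bullet> x + b * t < d" "0 \<le> b"
    "\<And>y s. f y \<le> ereal s \<Longrightarrow> d < a \<bullet> y + b * s"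
    using ereal_epigraph_separation[OF assms] by blast
  show ?thesis
  proof (cases "b = 0")
    case False
    with sep(2) have "0 < b" by simp
    with sep(1) have "t < (- a /\<^sub>R b) \<bullet> x + d / b" by (simp add: field_simps)
    with affine_minorant_of_separation[OF \<open>0 < b\<close> sep(3)] show ?thesis by (rule that)
  next
    case True
    \<comment> \<open>vertical hyperplane: tilt any affine minorant by a large multiple of d - a \<bullet> y,
      which is negative on the domain of f\<close>
    obtain \<eta>0 c0 where minorant0: "\<And>y. ereal (\<eta>0 \<bullet> y + c0) \<le> f y"
      using ereal_convex_lsc_has_affine_minorant[OF assms(1-3)] by blast
    define l where "l = (\<bar>t - \<eta>0 \<bullet> x - c0\<bar> + 1) / (d - a \<bullet> x)"
    have "0 < d - a \<bullet> x" using sep(1) True by simp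
    then have "0 \<le> l" and above: "t < \<eta>0 \<bullet> x + c0 + l * (d - a \<bullet> x)"
      unfolding l_def by auto
    have "ereal ((\<eta>0 - l *\<^sub>R a) \<bullet> y + (c0 + l * d)) \<le> f y" for y
    proof (rule ereal_le_real)
      fix s assume "f y \<le> ereal s"
      then have "d < a \<bullet> y" using sep(3) True by auto
      with \<open>0 \<le> l\<close> have "l * d \<le> l * (a \<bullet> y)" by (simp add: mult_left_mono)
      then have "(\<eta>0 - l *\<^sub>R a) \<bullet> y + (c0 + l * d) \<le> \<eta>0 \<bullet> y + c0"
        by (simp add: inner_diff_left algebra_simps)
      then have "ereal ((\<eta>0 - l *\<^sub>R a) \<bullet> y + (c0 + l * d)) \<le> f y"
        using minorant0 order_trans ereal_less_eq(3) by blast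
      then show "ereal ((\<eta>0 - l *\<^sub>R a) \<bullet> y + (c0 + l * d)) \<le> ereal s"
        using \<open>f y \<le> ereal s\<close> by (rule order_trans)
    qed
    moreover have "t < (\<eta>0 - l *\<^sub>R a) \<bullet> x + (c0 + l * d)"
      using above by (simp add: inner_diff_left algebra_simps)
    ultimately show ?thesis by (rule that)
  qed
qed

lemma enn2ereal_eq_ereal_enn2real: "x \<noteq> \<top> \<Longrightarrow> enn2ereal x = ereal (enn2real x)"
  by (metis enn2real_nonneg enn2ereal_ennreal ennreal_enn2real_if)

lemma ereal_integral_ereal:
  fixes h :: "'a \<Rightarrow> real"
  assumes "integrable M h"
  shows "ereal_integral M (\<lambda>x. ereal (h x)) = ereal (\<integral>x. h x \<partial>M)"
proof -
  have pos: "(\<lambda>x. e2ennreal (max 0 (ereal (h x)))) = (\<lambda>x. ennreal (h x))"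
    and neg: "(\<lambda>x. e2ennreal (max 0 (- ereal (h x)))) = (\<lambda>x. ennreal (- h x))"
    by (auto simp: max_def ennreal_neg)
  have "(\<integral>\<^sup>+x. ennreal (h x) \<partial>M) \<noteq> \<top>" "(\<integral>\<^sup>+x. ennreal (- h x) \<partial>M) \<noteq> \<top>"
    using assms by auto
  then show ?thesis
    unfolding ereal_integral_def pos neg real_lebesgue_integral_def[OF assms]
    by (simp add: enn2ereal_eq_ereal_enn2real)
qed

lemma integral_le_ereal_integral:
  fixes h :: "'a \<Rightarrow> real"
  assumes "integrable M h" and le: "\<And>x. x \<in> space M \<Longrightarrow> ereal (h x) \<le> f x"
  shows "ereal (\<integral>x. h x \<partial>M) \<le> ereal_integral M f"
proof -
  have "ereal (\<integral>x. h x \<partial>M) = ereal_integral M (\<lambda>x. ereal (h x))"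
    using ereal_integral_ereal[OF assms(1)] by simp
  also have "\<dots> \<le> ereal_integral M f"
    unfolding ereal_integral_def
  proof (rule ereal_minus_mono)
    show "enn2ereal (\<integral>\<^sup>+ x. e2ennreal (max 0 (ereal (h x))) \<partial>M)
        \<le> enn2ereal (\<integral>\<^sup>+ x. e2ennreal (max 0 (f x)) \<partial>M)"
      using le by (subst less_eq_ennreal.rep_eq[symmetric],
          intro nn_integral_mono e2ennreal_mono max.mono) auto
    show "enn2ereal (\<integral>\<^sup>+ x. e2ennreal (max 0 (- f x)) \<partial>M)
        \<le> enn2ereal (\<integral>\<^sup>+ x. e2ennreal (max 0 (- ereal (h x))) \<partial>M)"
      using le by (subst less_eq_ennreal.rep_eq[symmetric],
          intro nn_integral_mono e2ennreal_mono max.mono) (auto simp del: uminus_ereal.simps)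
  qed
  finally show ?thesis .
qed

lemma ereal_integral_cong_AE:
  assumes "AE x in M. f x = g x"
  shows "ereal_integral M f = ereal_integral M g"
  unfolding ereal_integral_def
  by (intro arg_cong2[where f="(-)"] arg_cong[where f=enn2ereal] nn_integral_cong_AE)
     (use assms in auto)

lemma transport_cost_ge_integral_potentials:
  fixes c :: "'a::topological_space \<Rightarrow> 'a \<Rightarrow> ereal"
  assumes "integrable \<nu> \<phi>" and "integrable \<mu> \<psi>" and "\<And>x y. ereal (\<phi> x + \<psi> y) \<le> c x y"
  shows "ereal ((\<integral>x. \<phi> x \<partial>\<nu>) + (\<integral>y. \<psi> y \<partial>\<mu>)) \<le> transport_cost c \<nu> \<mu>"
  unfolding transport_cost_def
proof (rule INF_greatest)
  fix \<pi> assume "\<pi> \<in> couplings \<nu> \<mu>"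
  then have "prob_space \<pi>" and sets_\<pi>: "sets \<pi> = sets (borel \<Otimes>\<^sub>M borel)"
    and marginals: "\<nu> = distr \<pi> borel fst" "\<mu> = distr \<pi> borel snd"
    unfolding couplings_def by auto
  then interpret prob_space \<pi> by simp
  have fst: "fst \<in> measurable \<pi> borel" and snd: "snd \<in> measurable \<pi> borel"
    by (simp_all add: measurable_cong_sets[OF sets_\<pi> refl])
  have \<phi>: "\<phi> \<in> borel_measurable borel" and \<psi>: "\<psi> \<in> borel_measurable borel"
    using assms(1,2) unfolding marginals
    by (metis borel_measurable_integrable measurable_cong_sets sets_distr)+
  have int_\<phi>: "integrable \<pi> (\<lambda>p. \<phi> (fst p))" and int_\<psi>: "integrable \<pi> (\<lambda>p. \<psi> (snd p))"
    using assms(1,2) unfolding marginals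
    by (simp_all add: integrable_distr_eq[OF fst \<phi>] integrable_distr_eq[OF snd \<psi>])
  have "(\<integral>x. \<phi> x \<partial>\<nu>) + (\<integral>y. \<psi> y \<partial>\<mu>) = (\<integral>p. \<phi> (fst p) + \<psi> (snd p) \<partial>\<pi>)"
    unfolding marginals using int_\<phi> int_\<psi>
    by (simp add: integral_distr[OF fst \<phi>] integral_distr[OF snd \<psi>])
  also have "ereal \<dots> \<le> ereal_integral \<pi> (\<lambda>(x, y). c x y)"
    using int_\<phi> int_\<psi> assms(3) by (intro integral_le_ereal_integral) auto
  finally show "ereal ((\<integral>x. \<phi> x \<partial>\<nu>) + (\<integral>y. \<psi> y \<partial>\<mu>)) \<le> ereal_integral \<pi> (\<lambda>(x, y). c x y)" .
qed

lemma abs_exp_mult_le: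
  fixes t B :: real
  assumes "t \<le> B"
  shows "\<bar>exp t * t\<bar> \<le> 1 + \<bar>B\<bar> * exp B"
proof (cases "t \<le> 0")
  case True
  have "- t \<le> exp (- t)" using exp_ge_add_one_self[of "- t"] by linarith
  then have "exp t * (- t) \<le> exp t * exp (- t)" by (intro mult_left_mono) auto
  then have "exp t * (- t) \<le> 1" by (simp add: exp_minus)
  moreover have "\<bar>exp t * t\<bar> = exp t * (- t)" using True by (simp add: abs_mult)
  ultimately show ?thesis by (simp add: add_increasing2)
next
  case False
  then have "exp t * t \<le> exp B * \<bar>B\<bar>" using assms by (intro mult_mono) auto
  then show ?thesis using False by (simp add: mult.commute)
qed

definition exp_tilt :: "'a measure \<Rightarrow> ('a \<Rightarrow> real) \<Rightarrow> 'a measure" where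
  "exp_tilt M g = density M (\<lambda>x. ennreal (exp (g x) / (\<integral>y. exp (g y) \<partial>M)))"

context prob_space
begin

context
  fixes g :: "'a \<Rightarrow> real" and B :: real
  assumes g_borel: "g \<in> borel_measurable M" and g_le: "\<And>x. g x \<le> B"
begin

lemma integrable_exp_bounded_above: "integrable M (\<lambda>x. exp (g x))"
  using g_borel g_le by (intro integrable_const_bound[where B="exp B"]) auto

lemma integrable_exp_mult_bounded_above: "integrable M (\<lambda>x. exp (g x) * g x)"
  using g_borel abs_exp_mult_le[OF g_le]
  by (intro integrable_const_bound[where B="1 + \<bar>B\<bar> * exp B"]) auto

lemma integral_exp_pos: "0 < (\<integral>x. exp (g x) \<partial>M)"
proof -
  have "(\<integral>x. exp (g x) \<partial>M) \<noteq> 0"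
    using integral_nonneg_eq_0_iff_AE[OF integrable_exp_bounded_above] by simp
  moreover have "0 \<le> (\<integral>x. exp (g x) \<partial>M)" by (rule integral_nonneg_AE) simp
  ultimately show ?thesis by linarith
qed

lemma prob_space_exp_tilt: "prob_space (exp_tilt M g)"
proof (rule prob_spaceI)
  define Z where "Z = (\<integral>x. exp (g x) \<partial>M)"
  have "emeasure (exp_tilt M g) (space (exp_tilt M g)) = (\<integral>\<^sup>+x. ennreal (exp (g x) / Z) \<partial>M)"
    using g_borel by (simp add: exp_tilt_def emeasure_density Z_def)
  also have "\<dots> = ennreal (\<integral>x. exp (g x) / Z \<partial>M)"
    using integrable_exp_bounded_above integral_exp_pos unfolding Z_def
    by (intro nn_integral_eq_integral) auto
  also have "\<dots> = 1"
    using integral_exp_pos unfolding Z_def by simp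
  finally show "emeasure (exp_tilt M g) (space (exp_tilt M g)) = 1" .
qed

lemma integrable_exp_tilt: "integrable (exp_tilt M g) g"
  and integral_exp_tilt:
    "(\<integral>x. g x \<partial>exp_tilt M g) = (\<integral>x. exp (g x) * g x \<partial>M) / (\<integral>x. exp (g x) \<partial>M)"
  using g_borel integral_exp_pos integrable_exp_mult_bounded_above
  by (simp_all add: exp_tilt_def integrable_density integral_density)

lemma rel_entropy_exp_tilt:
  "rel_entropy (exp_tilt M g) M = ereal ((\<integral>x. g x \<partial>exp_tilt M g) - ln (\<integral>x. exp (g x) \<partial>M))"
proof -
  define Z where "Z = (\<integral>x. exp (g x) \<partial>M)"
  define \<rho> where "\<rho> x = exp (g x) / Z" for x
  have "0 < Z" unfolding Z_def by (rule integral_exp_pos)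
  have \<rho>_borel: "\<rho> \<in> borel_measurable M" unfolding \<rho>_def using g_borel by measurable
  have tilt: "exp_tilt M g = density M (\<lambda>x. ennreal (\<rho> x))"
    unfolding exp_tilt_def \<rho>_def Z_def ..
  have "AE x in M. RN_deriv M (exp_tilt M g) x = ennreal (\<rho> x)"
    unfolding tilt using \<rho>_borel by (intro AE_symmetric[OF RN_deriv_unique]) simp_all
  moreover have "\<rho> x * ln (\<rho> x) = exp (g x) * g x / Z - ln Z * (exp (g x) / Z)" for x
    using \<open>0 < Z\<close> by (simp add: \<rho>_def ln_div field_simps)
  moreover have "0 \<le> \<rho> x" for x
    using \<open>0 < Z\<close> by (simp add: \<rho>_def)
  ultimately have "AE x in M. (let f = enn2real (RN_deriv M (exp_tilt M g) x) in ereal (f * ln f))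
      = ereal (exp (g x) * g x / Z - ln Z * (exp (g x) / Z))"
    by (auto simp: Let_def elim: AE_mp)
  then have "rel_entropy (exp_tilt M g) M
      = ereal_integral M (\<lambda>x. ereal (exp (g x) * g x / Z - ln Z * (exp (g x) / Z)))"
    unfolding rel_entropy_def using \<rho>_borel
    by (simp add: tilt absolutely_continuousI_density ereal_integral_cong_AE)
  also have "\<dots> = ereal ((\<integral>x. exp (g x) * g x \<partial>M) / Z - ln Z)"
    using integrable_exp_mult_bounded_above integrable_exp_bounded_above \<open>0 < Z\<close>
    by (subst ereal_integral_ereal) (auto simp: Z_def)
  finally show ?thesis by (simp add: integral_exp_tilt Z_def)
qed

end

end

lemma integral_exp_min_inner_le:
  fixes \<mu> :: "'a::euclidean_space measure" and \<alpha> :: "'a \<Rightarrow> ereal"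
  assumes "borel_prob \<mu>" and "integrable \<mu> (\<lambda>x. x)" and "(\<integral>x. x \<partial>\<mu>) = 0"
    and transport: "\<And>\<nu>. borel_prob \<nu> \<Longrightarrow>
           transport_cost (\<lambda>x y. \<alpha> (x - y)) \<nu> \<mu> \<le> rel_entropy \<nu> \<mu>"
    and minorant: "\<And>y. ereal (\<eta> \<bullet> y + c) \<le> \<alpha> y"
  shows "(\<integral>y. exp (min (\<eta> \<bullet> y) B) \<partial>\<mu>) \<le> exp (- c)"
proof -
  interpret prob_space \<mu> using assms(1) unfolding borel_prob_def by simp
  have sets_\<mu>: "sets \<mu> = sets borel" using assms(1) unfolding borel_prob_def by simp
  \<comment> \<open>truncation keeps the entropy of the tilted measure finite\<close>
  define g where "g y = min (\<eta> \<bullet> y) B" for y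
  have g_borel: "g \<in> borel_measurable \<mu>"
    unfolding g_def measurable_cong_sets[OF sets_\<mu> refl] by measurable
  have g_le: "g y \<le> B" for y by (simp add: g_def)
  define \<nu> where "\<nu> = exp_tilt \<mu> g"
  have "borel_prob \<nu>"
    using prob_space_exp_tilt[OF g_borel g_le] sets_\<mu>
    by (simp add: borel_prob_def \<nu>_def exp_tilt_def)
  have "(\<integral>y. c - \<eta> \<bullet> y \<partial>\<mu>) = c" using assms(2,3) by (simp add: prob_space)
  moreover have "ereal (g x + (c - \<eta> \<bullet> y)) \<le> \<alpha> (x - y)" for x y
  proof -
    have "g x + (c - \<eta> \<bullet> y) \<le> \<eta> \<bullet> (x - y) + c" by (simp add: g_def inner_diff_right)
    then show ?thesis using minorant[of "x - y"] by (metis ereal_less_eq(3) order_trans)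
  qed
  ultimately have "ereal ((\<integral>x. g x \<partial>\<nu>) + c) \<le> transport_cost (\<lambda>x y. \<alpha> (x - y)) \<nu> \<mu>"
    using transport_cost_ge_integral_potentials[of \<nu> g \<mu> "\<lambda>y. c - \<eta> \<bullet> y"]
      integrable_exp_tilt[OF g_borel g_le] assms(2)
    unfolding \<nu>_def by auto
  also have "\<dots> \<le> rel_entropy \<nu> \<mu>" by (rule transport) fact
  also have "\<dots> = ereal ((\<integral>x. g x \<partial>\<nu>) - ln (\<integral>y. exp (g y) \<partial>\<mu>))"
    unfolding \<nu>_def by (rule rel_entropy_exp_tilt[OF g_borel g_le])
  finally have "ln (\<integral>y. exp (g y) \<partial>\<mu>) \<le> - c" by simp
  then show ?thesis
    using integral_exp_pos[OF g_borel g_le] unfolding g_def by (metis exp_le_cancel_iff exp_ln)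
qed

lemma nn_integral_exp_inner_le:
  fixes \<mu> :: "'a::euclidean_space measure" and \<alpha> :: "'a \<Rightarrow> ereal"
  assumes "borel_prob \<mu>" and "integrable \<mu> (\<lambda>x. x)" and "(\<integral>x. x \<partial>\<mu>) = 0"
    and "\<And>\<nu>. borel_prob \<nu> \<Longrightarrow>
           transport_cost (\<lambda>x y. \<alpha> (x - y)) \<nu> \<mu> \<le> rel_entropy \<nu> \<mu>"
    and "\<And>y. ereal (\<eta> \<bullet> y + c) \<le> \<alpha> y"
  shows "(\<integral>\<^sup>+y. ennreal (exp (\<eta> \<bullet> y)) \<partial>\<mu>) \<le> ennreal (exp (- c))"
proof -
  interpret prob_space \<mu> using assms(1) unfolding borel_prob_def by simp
  have sets_\<mu>: "sets \<mu> = sets borel" using assms(1) unfolding borel_prob_def by simp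
  define f where "f n y = exp (min (\<eta> \<bullet> y) (real n))" for n :: nat and y
  have f_borel: "f n \<in> borel_measurable \<mu>" for n
    unfolding f_def measurable_cong_sets[OF sets_\<mu> refl] by measurable
  have "incseq (\<lambda>n y. ennreal (f n y))"
    unfolding f_def incseq_def le_fun_def by (auto intro!: ennreal_leI)
  moreover have "(SUP n. ennreal (f n y)) = ennreal (exp (\<eta> \<bullet> y))" for y
  proof (rule antisym)
    show "(SUP n. ennreal (f n y)) \<le> ennreal (exp (\<eta> \<bullet> y))"
      unfolding f_def by (intro SUP_least ennreal_leI) auto
    have "f (nat \<lceil>\<eta> \<bullet> y\<rceil>) y = exp (\<eta> \<bullet> y)" unfolding f_def by linarith
    then show "ennreal (exp (\<eta> \<bullet> y)) \<le> (SUP n. ennreal (f n y))" by (metis SUP_upper UNIV_I)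
  qed
  ultimately have "(\<integral>\<^sup>+y. ennreal (exp (\<eta> \<bullet> y)) \<partial>\<mu>) = (SUP n. \<integral>\<^sup>+y. ennreal (f n y) \<partial>\<mu>)"
    using f_borel by (simp add: nn_integral_monotone_convergence_SUP[symmetric])
  also have "\<dots> \<le> ennreal (exp (- c))"
  proof (rule SUP_least)
    fix n
    have "integrable \<mu> (f n)"
      using f_borel by (intro integrable_const_bound[where B="exp (real n)"]) (auto simp: f_def)
    then have "(\<integral>\<^sup>+y. ennreal (f n y) \<partial>\<mu>) = ennreal (\<integral>y. f n y \<partial>\<mu>)"
      by (rule nn_integral_eq_integral) (simp add: f_def)
    also have "\<dots> \<le> ennreal (exp (- c))"
      unfolding f_def by (intro ennreal_leI integral_exp_min_inner_le[OF assms])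
    finally show "(\<integral>\<^sup>+y. ennreal (f n y) \<partial>\<mu>) \<le> ennreal (exp (- c))" .
  qed
  finally show ?thesis .
qed

lemma log_laplace_le:
  fixes \<mu> :: "'a::euclidean_space measure"
  assumes "borel_prob \<mu>" and le: "(\<integral>\<^sup>+x. ennreal (exp (\<xi> \<bullet> x)) \<partial>\<mu>) \<le> ennreal (exp b)"
  shows "log_laplace \<mu> \<xi> \<le> ereal b"
proof -
  interpret prob_space \<mu> using assms(1) unfolding borel_prob_def by simp
  have sets_\<mu>: "sets \<mu> = sets borel" using assms(1) unfolding borel_prob_def by simp
  define I where "I = (\<integral>\<^sup>+x. ennreal (exp (\<xi> \<bullet> x)) \<partial>\<mu>)"
  have "(\<lambda>x. ennreal (exp (\<xi> \<bullet> x))) \<in> borel_measurable \<mu>"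
    unfolding measurable_cong_sets[OF sets_\<mu> refl] by measurable
  then have "I \<noteq> 0" unfolding I_def by (simp add: nn_integral_0_iff_AE)
  moreover have "I < \<top>" using le unfolding I_def by (simp add: le_less_trans)
  ultimately have "0 < enn2real I" by (simp add: enn2real_positive_iff zero_less_iff_neq_zero)
  moreover have "enn2real I \<le> exp b" using le unfolding I_def by (intro enn2real_leI) auto
  ultimately have "ln (enn2real I) \<le> b" by (metis ln_exp ln_le_cancel_iff exp_gt_zero)
  then show ?thesis using \<open>I < \<top>\<close> unfolding log_laplace_def I_def[symmetric] by simp
qed

lemma cramer_transform_ge:
  assumes "log_laplace \<mu> \<xi> \<le> ereal b"
  shows "ereal (\<xi> \<bullet> x - b) \<le> cramer_transform \<mu> x"
proof -
  have "ereal (\<xi> \<bullet> x - b) = ereal (\<xi> \<bullet> x) - ereal b" by simp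
  also have "\<dots> \<le> ereal (\<xi> \<bullet> x) - log_laplace \<mu> \<xi>"
    using assms by (intro ereal_minus_mono order_refl)
  also have "\<dots> \<le> cramer_transform \<mu> x"
    unfolding cramer_transform_def by (rule SUP_upper) simp
  finally show ?thesis .
qed

theorem fact3p7:
  fixes \<mu> :: "'a::euclidean_space measure" and \<alpha> :: "'a \<Rightarrow> ereal"
  assumes "borel_prob \<mu>"
    and "integrable \<mu> (\<lambda>x. x)" and "(\<integral>x. x \<partial>\<mu>) = 0"
    and "ereal_convex \<alpha>" and "ereal_lsc \<alpha>" and "ereal_proper \<alpha>"
    and "\<And>\<nu>. borel_prob \<nu> \<Longrightarrow>
           transport_cost (\<lambda>x y. \<alpha> (x - y)) \<nu> \<mu> \<le> rel_entropy \<nu> \<mu>"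
  shows "\<alpha> x \<le> cramer_transform \<mu> x"
proof (rule dense_le)
  fix t assume "t < \<alpha> x"
  show "t \<le> cramer_transform \<mu> x"
  proof (cases t)
    case (real r)
    with \<open>t < \<alpha> x\<close> obtain \<eta> c where minorant: "\<And>y. ereal (\<eta> \<bullet> y + c) \<le> \<alpha> y"
      and "r < \<eta> \<bullet> x + c"
      using ereal_convex_lsc_affine_minorant_above[OF assms(4-6)] by blast
    have "log_laplace \<mu> \<eta> \<le> ereal (- c)"
      using log_laplace_le[OF assms(1) nn_integral_exp_inner_le[OF assms(1-3,7) minorant]] .
    then have "ereal (\<eta> \<bullet> x + c) \<le> cramer_transform \<mu> x"
      using cramer_transform_ge by fastforce
    with real \<open>r < \<eta> \<bullet> x + c\<close> show ?thesis
      by (metis ereal_less_eq(3) less_imp_le order_trans)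
  qed (use \<open>t < \<alpha> x\<close> in auto)
qed

end
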